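(* Let $[\pi]$ be any vincular cyclic pattern of length 3 with exactly one vinculum, i.e. $[\pi]$ is one of $[\overline{12}3],[\overline{21}3],[\overline{23}1],[\overline{32}1],[\overline{13}2],[\overline{31}2]$. Then $\left|\mathrm{Av}_n[\pi]\right|=1$ for all $n\ge 1$.
   Context: For $\sigma=\sigma_1\cdots\sigma_n\in S_n$, the cyclic permutation $[\sigma]$ is the set of all rotations $\sigma_k\cdots\sigma_n\sigma_1\cdots\sigma_{k-1}$ of $\sigma$; $[S_n]$ denotes the set of cyclic permutations of length $n$. A vincular pattern is a permutation $\pi\in S_k$ in which some pairs of adjacent positions are joined by an overline (a vinculum). A linear permutation $\tau$ contains the vincular pattern $\pi$ if $\tau$ has a subsequence order-isomorphic to $\pi$ in which, for every pair of positions of $\pi$ joined by a vinculum, the corresponding entries are adjacent in $\tau$. A cyclic permutation $[\sigma]$ contains $[\pi]$ if some rotation of $\sigma$ contains $\pi$; otherwise it avoids $[\pi]$. $\mathrm{Av}_n[\pi]$ is the set of $[\sigma]\in[S_n]$ avoiding $[\pi]$. *)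

theory Defs
  imports Main
begin

definition perms :: "nat \<Rightarrow> nat list set" where
  "perms n = {\<sigma>. distinct \<sigma> \<and> set \<sigma> = {1..n}}"

definition cyc :: "nat list \<Rightarrow> nat list set" where
  "cyc \<sigma> = {rotate k \<sigma> | k. True}"

definition cyc_perms :: "nat \<Rightarrow> nat list set set" where
  "cyc_perms n = cyc ` perms n"

text \<open>A vincular pattern is a pattern pi (a list) together with a set V of
  0-based positions i such that positions i and i+1 are joined by a vinculum.
  tau contains (pi,V) if there is an occurrence, given by strictly increasing
  positions f 0 < ... < f (k-1) in tau, order-isomorphic to pi, such that
  for every vinculum i the entries at f i and f (i+1) are adjacent in tau.\<close>
definition vcontains :: "nat list \<Rightarrow> nat list \<Rightarrow> nat set \<Rightarrow> bool" where
  "vcontains \<tau> \<pi> V \<longleftrightarrow>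
     (\<exists>f. strict_mono_on {..<length \<pi>} f
        \<and> (\<forall>i<length \<pi>. f i < length \<tau>)
        \<and> (\<forall>i<length \<pi>. \<forall>j<length \<pi>. (\<tau> ! f i < \<tau> ! f j) \<longleftrightarrow> (\<pi> ! i < \<pi> ! j))
        \<and> (\<forall>i\<in>V. Suc i < length \<pi> \<longrightarrow> f (Suc i) = Suc (f i)))"

definition cyc_contains :: "nat list set \<Rightarrow> nat list \<Rightarrow> nat set \<Rightarrow> bool" where
  "cyc_contains C \<pi> V \<longleftrightarrow> (\<exists>\<tau>\<in>C. vcontains \<tau> \<pi> V)"

definition Av :: "nat \<Rightarrow> nat list \<Rightarrow> nat set \<Rightarrow> nat list set set" where
  "Av n \<pi> V = {C \<in> cyc_perms n. \<not> cyc_contains C \<pi> V}"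

end

theory Submission
  imports Defs
begin

(* Containing [\overline{ab}c] is a local property of the cycle: it means that some entry x is
   cyclically followed by an entry y such that x, y and a third entry z form the pattern.
   Avoiding [\overline{12}3] thus says that every ascent x < y of the cycle ends at n, avoiding
   [\overline{23}1] that every ascent starts at 1, and avoiding [\overline{13}2] that every ascent
   goes from x to x + 1.  Reading the cycle from n, towards 1, resp. from 1, these force it to be
   the decreasing cycle n ... 1, resp. the increasing one 1 ... n, and these cycles do avoid the
   respective pattern.  Reversing a cycle reverses its adjacent pairs, which exchanges the
   remaining three patterns with these. *)

(* otherwise simp rewrites the increasing cycle [1..<Suc n] to [1..<n] @ [n] *)
declare upt_Suc [simp del]

lemma mem_cyc_iff: "\<tau> \<in> cyc \<sigma> \<longleftrightarrow> (\<exists>k. \<tau> = rotate k \<sigma>)"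
  by (simp add: cyc_def)

lemma self_in_cyc: "\<sigma> \<in> cyc \<sigma>"
  unfolding mem_cyc_iff by (metis rotate0 id_apply)

lemma rotate_in_cyc: "\<tau> \<in> cyc \<sigma> \<Longrightarrow> rotate k \<tau> \<in> cyc \<sigma>"
  unfolding cyc_def by (auto simp: rotate_rotate)

lemma set_in_cyc: "\<tau> \<in> cyc \<sigma> \<Longrightarrow> set \<tau> = set \<sigma>"
  by (auto simp: mem_cyc_iff)

lemma perms_in_cyc: "\<sigma> \<in> perms n \<Longrightarrow> \<tau> \<in> cyc \<sigma> \<Longrightarrow> \<tau> \<in> perms n"
  by (clarsimp simp: mem_cyc_iff perms_def)

lemma cyc_sym: "\<tau> \<in> cyc \<sigma> \<Longrightarrow> \<sigma> \<in> cyc \<tau>"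
proof -
  assume "\<tau> \<in> cyc \<sigma>"
  then obtain k where k: "\<tau> = rotate k \<sigma>"
    unfolding mem_cyc_iff by blast
  show "\<sigma> \<in> cyc \<tau>"
  proof (cases "\<sigma> = []")
    case False
    then have "k \<le> length \<sigma> * k"
      by (simp add: Suc_le_eq)
    then have "rotate (length \<sigma> * k - k) \<tau> = rotate (length \<sigma> * k) \<sigma>"
      by (simp add: k rotate_rotate)
    also have "\<dots> = \<sigma>"
      by simp
    finally show ?thesis
      unfolding mem_cyc_iff by metis
  qed (simp add: k self_in_cyc)
qed

lemma cyc_eq:
  assumes "\<tau> \<in> cyc \<sigma>"
  shows "cyc \<tau> = cyc \<sigma>"
proof -
  have "cyc \<beta> \<subseteq> cyc \<alpha>" if "\<beta> \<in> cyc \<alpha>" for \<alpha> \<beta>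
    using rotate_in_cyc[OF that] unfolding cyc_def[of \<beta>] by auto
  then show ?thesis
    using assms cyc_sym by blast
qed

lemma cyc_rev: "cyc (rev \<sigma>) = rev ` cyc \<sigma>"
proof -
  have rev_rotate: "rev (rotate k xs) \<in> cyc (rev xs)" for k and xs :: "nat list"
    using rotate_rev[of _ "rev xs"] unfolding mem_cyc_iff by (metis rev_rev_ident)
  show ?thesis
  proof
    show "cyc (rev \<sigma>) \<subseteq> rev ` cyc \<sigma>"
    proof
      fix \<tau> assume "\<tau> \<in> cyc (rev \<sigma>)"
      then obtain k where "\<tau> = rotate k (rev \<sigma>)"
        unfolding mem_cyc_iff by blast
      then have "rev \<tau> \<in> cyc \<sigma>"
        using rev_rotate[of k "rev \<sigma>"] by simp
      then show "\<tau> \<in> rev ` cyc \<sigma>"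
        by (metis image_eqI rev_rev_ident)
    qed
    show "rev ` cyc \<sigma> \<subseteq> cyc (rev \<sigma>)"
      using rev_rotate by (auto simp: mem_cyc_iff)
  qed
qed

lemma cyc_rev_eq_iff: "cyc (rev \<sigma>) = cyc (rev \<tau>) \<longleftrightarrow> cyc \<sigma> = cyc \<tau>"
  by (simp add: cyc_rev inj_image_eq_iff)

lemma cyc_Cons_exists: "x \<in> set \<sigma> \<Longrightarrow> \<exists>\<rho>. x # \<rho> \<in> cyc \<sigma>"
proof -
  assume "x \<in> set \<sigma>"
  then obtain a b where "\<sigma> = a @ x # b"
    by (meson split_list)
  then have "rotate (length a) \<sigma> = x # b @ a"
    by (simp add: rotate_append)
  then show ?thesis
    using self_in_cyc rotate_in_cyc by metis
qed

lemma cyc_snoc_exists: "x \<in> set \<sigma> \<Longrightarrow> \<exists>\<rho>. \<rho> @ [x] \<in> cyc \<sigma>"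
proof -
  assume "x \<in> set \<sigma>"
  then obtain a b where "\<sigma> = (a @ [x]) @ b"
    by (metis append.assoc append_Cons append_Nil split_list)
  then have "rotate (length (a @ [x])) \<sigma> = (b @ a) @ [x]"
    using rotate_append[of "a @ [x]" b] by simp
  then show ?thesis
    using self_in_cyc rotate_in_cyc by metis
qed

lemma set_perms: "\<sigma> \<in> perms n \<Longrightarrow> set \<sigma> = {1..n}"
  by (simp add: perms_def)

lemma distinct_perms: "\<sigma> \<in> perms n \<Longrightarrow> distinct \<sigma>"
  by (simp add: perms_def)

lemma length_perms: "\<sigma> \<in> perms n \<Longrightarrow> length \<sigma> = n"
  using distinct_card[of \<sigma>] by (simp add: perms_def)

lemma rev_perms: "\<sigma> \<in> perms n \<Longrightarrow> rev \<sigma> \<in> perms n"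
  by (simp add: perms_def)

lemma upt_perms: "[1..<Suc n] \<in> perms n"
  by (simp add: perms_def atLeastLessThanSuc_atLeastAtMost)

lemma upt_if_sorted_perms:
  assumes "\<tau> \<in> perms n" "sorted_wrt (<) \<tau>"
  shows "\<tau> = [1..<Suc n]"
  using assms strict_sorted_equal[of "[1..<Suc n]" \<tau>]
  by (simp add: perms_def atLeastLessThanSuc_atLeastAtMost)

lemma rev_upt_if_sorted_desc_perms:
  assumes "\<tau> \<in> perms n" "sorted_wrt (>) \<tau>"
  shows "\<tau> = rev [1..<Suc n]"
proof -
  have "rev \<tau> \<in> perms n"
    using assms(1) by (rule rev_perms)
  moreover have "sorted_wrt (<) (rev \<tau>)"
    using assms(2) by (simp add: sorted_wrt_rev)
  ultimately have "rev \<tau> = [1..<Suc n]"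
    by (rule upt_if_sorted_perms)
  then show ?thesis
    by (metis rev_rev_ident)
qed

definition cyc_adj :: "nat list \<Rightarrow> nat \<Rightarrow> nat \<Rightarrow> bool" where
  "cyc_adj \<sigma> x y \<longleftrightarrow> (\<exists>\<rho>. x # y # \<rho> \<in> cyc \<sigma>)"

lemma cyc_adj_nth:
  assumes "\<tau> \<in> cyc \<sigma>" "Suc i < length \<tau>"
  shows "cyc_adj \<sigma> (\<tau> ! i) (\<tau> ! Suc i)"
proof -
  have "rotate i \<tau> = drop i \<tau> @ take i \<tau>"
    using assms(2) by (simp add: rotate_drop_take)
  also have "drop i \<tau> = \<tau> ! i # \<tau> ! Suc i # drop (Suc (Suc i)) \<tau>"
    using assms(2) by (simp add: Cons_nth_drop_Suc)
  finally show ?thesis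
    unfolding cyc_adj_def using rotate_in_cyc[OF assms(1)] by (metis append_Cons)
qed

lemma cyc_adj_in_set: "cyc_adj \<sigma> x y \<Longrightarrow> x \<in> set \<sigma> \<and> y \<in> set \<sigma>"
  unfolding cyc_adj_def using set_in_cyc by fastforce

lemma cyc_adj_iff_snoc: "cyc_adj \<sigma> x y \<longleftrightarrow> (\<exists>\<rho>. \<rho> @ [x, y] \<in> cyc \<sigma>)"
proof
  assume "cyc_adj \<sigma> x y"
  then obtain \<rho> where "x # y # \<rho> \<in> cyc \<sigma>"
    unfolding cyc_adj_def by blast
  then have "rotate 2 (x # y # \<rho>) \<in> cyc \<sigma>"
    by (rule rotate_in_cyc)
  then show "\<exists>\<rho>. \<rho> @ [x, y] \<in> cyc \<sigma>"
    by (auto simp: numeral_2_eq_2 rotate_def)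
next
  assume "\<exists>\<rho>. \<rho> @ [x, y] \<in> cyc \<sigma>"
  then obtain \<rho> where "\<rho> @ [x, y] \<in> cyc \<sigma>"
    by blast
  then have "rotate (length \<rho>) (\<rho> @ [x, y]) \<in> cyc \<sigma>"
    by (rule rotate_in_cyc)
  then show "cyc_adj \<sigma> x y"
    unfolding cyc_adj_def by (auto simp: rotate_append)
qed

lemma cyc_adj_rev: "cyc_adj (rev \<sigma>) x y \<longleftrightarrow> cyc_adj \<sigma> y x"
proof -
  have "cyc_adj (rev \<sigma>) x y \<longleftrightarrow> (\<exists>\<rho>. rev (x # y # \<rho>) \<in> cyc \<sigma>)"
    unfolding cyc_adj_def cyc_rev by (metis image_iff rev_rev_ident)
  also have "\<dots> \<longleftrightarrow> (\<exists>\<rho>. \<rho> @ [y, x] \<in> cyc \<sigma>)"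
    by (metis append.assoc append_Cons append_Nil rev.simps rev_rev_ident)
  finally show ?thesis
    by (simp add: cyc_adj_iff_snoc)
qed

lemma cyc_adj_upt:
  assumes "cyc_adj [1..<Suc n] x y"
  shows "y = Suc x \<or> x = n \<and> y = 1"
proof -
  obtain \<rho> where "x # y # \<rho> \<in> cyc [1..<Suc n]"
    using assms unfolding cyc_adj_def by blast
  then obtain k where k: "rotate k [1..<Suc n] = x # y # \<rho>"
    unfolding mem_cyc_iff by metis
  have n: "1 < n"
    using arg_cong[where f = length, OF k] by simp
  have "x = Suc (k mod n)" "y = Suc (Suc k mod n)"
    using n nth_rotate[of 0 "[1..<Suc n]" k] nth_rotate[of 1 "[1..<Suc n]" k] unfolding k
    by simp_all
  then show ?thesis
    using n by (auto simp: mod_Suc)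
qed

lemma cyc_adj_rev_upt:
  assumes "cyc_adj (rev [1..<Suc n]) x y"
  shows "x = Suc y \<or> x = 1 \<and> y = n"
  using assms cyc_adj_upt by (auto simp: cyc_adj_rev)

definition order_iso :: "nat list \<Rightarrow> nat list \<Rightarrow> bool" where
  "order_iso xs ys \<longleftrightarrow> length xs = length ys \<and>
     (\<forall>i<length xs. \<forall>j<length xs. xs ! i < xs ! j \<longleftrightarrow> ys ! i < ys ! j)"

lemma order_iso_distinct:
  assumes "order_iso xs ys" "distinct ys"
  shows "distinct xs"
proof -
  have "xs ! i \<noteq> xs ! j" if "i < length xs" "j < length xs" "i \<noteq> j" for i j
  proof -
    have "ys ! i \<noteq> ys ! j"
      using assms that by (simp add: order_iso_def nth_eq_iff_index_eq)
    then show ?thesis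
      using assms(1) that unfolding order_iso_def by (metis less_irrefl linorder_neqE_nat)
  qed
  then show ?thesis
    by (simp add: distinct_conv_nth)
qed

lemma order_iso_123: "order_iso [x, y, z] [1, 2, 3] \<longleftrightarrow> x < y \<and> y < z"
  and order_iso_213: "order_iso [x, y, z] [2, 1, 3] \<longleftrightarrow> y < x \<and> x < z"
  and order_iso_231: "order_iso [x, y, z] [2, 3, 1] \<longleftrightarrow> z < x \<and> x < y"
  and order_iso_321: "order_iso [x, y, z] [3, 2, 1] \<longleftrightarrow> z < y \<and> y < x"
  and order_iso_132: "order_iso [x, y, z] [1, 3, 2] \<longleftrightarrow> x < z \<and> z < y"
  and order_iso_312: "order_iso [x, y, z] [3, 1, 2] \<longleftrightarrow> y < z \<and> z < x"
  by (auto simp: order_iso_def numeral_3_eq_3 All_less_Suc)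

lemma not_cyc_contains_if_no_adj_occurrence:
  assumes "length \<pi> = 3"
    and no_occ: "\<And>x y z. cyc_adj \<sigma> x y \<Longrightarrow> z \<in> set \<sigma> \<Longrightarrow> \<not> order_iso [x, y, z] \<pi>"
  shows "\<not> cyc_contains (cyc \<sigma>) \<pi> {0}"
proof
  assume "cyc_contains (cyc \<sigma>) \<pi> {0}"
  then obtain \<tau> f where \<tau>: "\<tau> \<in> cyc \<sigma>"
    and f: "\<forall>i<3. f i < length \<tau>"
      "\<forall>i<3. \<forall>j<3. \<tau> ! f i < \<tau> ! f j \<longleftrightarrow> \<pi> ! i < \<pi> ! j" "f 1 = Suc (f 0)"
    using assms(1) unfolding cyc_contains_def vcontains_def by auto
  have "cyc_adj \<sigma> (\<tau> ! f 0) (\<tau> ! f 1)"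
    using cyc_adj_nth[OF \<tau>, of "f 0"] f(1,3) by (simp add: numeral_3_eq_3 All_less_Suc)
  moreover have "\<tau> ! f 2 \<in> set \<sigma>"
    using f(1) set_in_cyc[OF \<tau>] nth_mem[of "f 2" \<tau>] by simp
  moreover have "order_iso [\<tau> ! f 0, \<tau> ! f 1, \<tau> ! f 2] \<pi>"
    using f(2) assms(1) unfolding order_iso_def by (simp add: numeral_3_eq_3 numeral_2_eq_2 All_less_Suc)
  ultimately show False
    using no_occ by blast
qed

lemma no_adj_occurrence_if_not_cyc_contains:
  assumes "\<not> cyc_contains (cyc \<sigma>) \<pi> {0}" "length \<pi> = 3" "distinct \<pi>"
    and adj: "cyc_adj \<sigma> x y" and z: "z \<in> set \<sigma>"
  shows "\<not> order_iso [x, y, z] \<pi>"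
proof
  assume iso: "order_iso [x, y, z] \<pi>"
  obtain \<rho> where \<tau>: "x # y # \<rho> \<in> cyc \<sigma>"
    using adj unfolding cyc_adj_def by blast
  have "distinct [x, y, z]"
    using order_iso_distinct[OF iso assms(3)] .
  with z set_in_cyc[OF \<tau>] have "z \<in> set \<rho>"
    by auto
  then obtain q where q: "q < length \<rho>" "\<rho> ! q = z"
    by (meson in_set_conv_nth)
  define f :: "nat \<Rightarrow> nat" where "f i = (if i < 2 then i else q + 2)" for i
  have "vcontains (x # y # \<rho>) \<pi> {0}"
    unfolding vcontains_def
  proof (intro exI conjI)
    show "strict_mono_on {..<length \<pi>} f"
      using assms(2) by (auto simp: strict_mono_on_def f_def)
    show "\<forall>i<length \<pi>. f i < length (x # y # \<rho>)"
      using q assms(2) by (simp add: f_def)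
    show "\<forall>i<length \<pi>. \<forall>j<length \<pi>. (x # y # \<rho>) ! f i < (x # y # \<rho>) ! f j \<longleftrightarrow> \<pi> ! i < \<pi> ! j"
      using iso q assms(2) unfolding order_iso_def
      by (simp add: f_def numeral_3_eq_3 numeral_2_eq_2 All_less_Suc)
    show "\<forall>i\<in>{0}. Suc i < length \<pi> \<longrightarrow> f (Suc i) = Suc (f i)"
      by (simp add: f_def)
  qed
  with \<tau> assms(1) show False
    unfolding cyc_contains_def by blast
qed

lemma cyc_eq_rev_upt_if_desc_rotation:
  assumes "\<sigma> \<in> perms n" "\<tau> \<in> cyc \<sigma>"
    and desc: "\<And>i. Suc i < length \<tau> \<Longrightarrow> \<tau> ! Suc i < \<tau> ! i"
  shows "cyc \<sigma> = cyc (rev [1..<Suc n])"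
proof -
  have "sorted_wrt (>) \<tau>"
    unfolding sorted_wrt_iff_nth_Suc_transp[OF transp_on_greater] using desc by blast
  with perms_in_cyc[OF assms(1,2)] have "\<tau> = rev [1..<Suc n]"
    by (rule rev_upt_if_sorted_desc_perms)
  then show ?thesis
    using cyc_eq[OF assms(2)] by simp
qed

lemma cyc_eq_rev_upt_if_ascents_end_at_max:
  assumes "\<sigma> \<in> perms n" "1 \<le> n" and asc: "\<And>x y. cyc_adj \<sigma> x y \<Longrightarrow> x < y \<Longrightarrow> y = n"
  shows "cyc \<sigma> = cyc (rev [1..<Suc n])"
proof -
  obtain \<rho> where \<tau>: "n # \<rho> \<in> cyc \<sigma>"
    using assms(1,2) cyc_Cons_exists[of n \<sigma>] by (auto simp: set_perms)
  have "distinct (n # \<rho>)"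
    using perms_in_cyc[OF assms(1) \<tau>] by (rule distinct_perms)
  show ?thesis
  proof (rule cyc_eq_rev_upt_if_desc_rotation[OF assms(1) \<tau>])
    fix i assume i: "Suc i < length (n # \<rho>)"
    with \<open>distinct (n # \<rho>)\<close> have "(n # \<rho>) ! Suc i \<noteq> (n # \<rho>) ! 0" "(n # \<rho>) ! Suc i \<noteq> (n # \<rho>) ! i"
      by (simp_all only: nth_eq_iff_index_eq)
    then show "(n # \<rho>) ! Suc i < (n # \<rho>) ! i"
      using asc[OF cyc_adj_nth[OF \<tau> i]] by (metis linorder_neqE_nat nth_Cons_0)
  qed
qed

lemma cyc_eq_rev_upt_if_ascents_start_at_min:
  assumes "\<sigma> \<in> perms n" "1 \<le> n" and asc: "\<And>x y. cyc_adj \<sigma> x y \<Longrightarrow> x < y \<Longrightarrow> x = 1"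
  shows "cyc \<sigma> = cyc (rev [1..<Suc n])"
proof -
  obtain \<rho> where \<tau>: "\<rho> @ [1] \<in> cyc \<sigma>"
    using assms(1,2) cyc_snoc_exists[of 1 \<sigma>] by (auto simp: set_perms)
  have "distinct (\<rho> @ [1])"
    using perms_in_cyc[OF assms(1) \<tau>] by (rule distinct_perms)
  show ?thesis
  proof (rule cyc_eq_rev_upt_if_desc_rotation[OF assms(1) \<tau>])
    fix i assume i: "Suc i < length (\<rho> @ [1])"
    then have "(\<rho> @ [1]) ! i \<in> set \<rho>"
      by (simp add: nth_append)
    with \<open>distinct (\<rho> @ [1])\<close> have "(\<rho> @ [1]) ! i \<noteq> 1"
      by auto
    moreover have "(\<rho> @ [1]) ! Suc i \<noteq> (\<rho> @ [1]) ! i"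
      using \<open>distinct (\<rho> @ [1])\<close> i by (simp only: nth_eq_iff_index_eq)
    ultimately show "(\<rho> @ [1]) ! Suc i < (\<rho> @ [1]) ! i"
      using asc[OF cyc_adj_nth[OF \<tau> i]] by (metis linorder_neqE_nat)
  qed
qed

lemma cyc_eq_upt_if_ascents_are_successor:
  assumes "\<sigma> \<in> perms n" "1 \<le> n" and asc: "\<And>x y. cyc_adj \<sigma> x y \<Longrightarrow> x < y \<Longrightarrow> y = Suc x"
  shows "cyc \<sigma> = cyc [1..<Suc n]"
proof -
  obtain \<rho> where \<rho>: "1 # \<rho> \<in> cyc \<sigma>"
    using assms(1,2) cyc_Cons_exists[of 1 \<sigma>] by (auto simp: set_perms)
  define \<tau> where "\<tau> = 1 # \<rho>"
  have \<tau>: "\<tau> \<in> cyc \<sigma>" "\<tau> ! 0 = 1"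
    using \<rho> by (simp_all add: \<tau>_def)
  have perm: "\<tau> \<in> perms n"
    using perms_in_cyc[OF assms(1) \<tau>(1)] .
  then have len: "length \<tau> = n"
    by (rule length_perms)
  have "\<forall>j\<le>i. \<tau> ! j = Suc j" if "i < n" for i
    using that
  proof (induction i)
    case 0
    then show ?case
      using \<tau>(2) by simp
  next
    case (Suc i)
    then have IH: "\<tau> ! j = Suc j" if "j \<le> i" for j
      using that by simp
    have "Suc i < length \<tau>"
      using Suc.prems len by simp
    (* the values 1, ..., Suc i are taken by \<tau> ! 0, ..., \<tau> ! i *)
    have "Suc i < \<tau> ! Suc i"
    proof (rule ccontr)
      assume "\<not> Suc i < \<tau> ! Suc i"
      moreover have "\<tau> ! Suc i \<in> {1..n}"
        using set_perms[OF perm] nth_mem[OF \<open>Suc i < length \<tau>\<close>] by simp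
      ultimately obtain j where "j \<le> i" "\<tau> ! Suc i = Suc j"
        by (cases "\<tau> ! Suc i") auto
      then have "\<tau> ! Suc i = \<tau> ! j"
        using IH by simp
      then show False
        using distinct_perms[OF perm] \<open>Suc i < length \<tau>\<close> \<open>j \<le> i\<close> by (simp add: nth_eq_iff_index_eq)
    qed
    then have "\<tau> ! Suc i = Suc (\<tau> ! i)"
      using asc[OF cyc_adj_nth[OF \<tau>(1) \<open>Suc i < length \<tau>\<close>]] IH[of i] by simp
    then show ?case
      using IH by (auto simp: le_Suc_eq)
  qed
  then have "\<tau> = [1..<Suc n]"
    by (intro nth_equalityI) (auto simp: len)
  then show ?thesis
    using cyc_eq[OF \<tau>(1)] by simp
qed

lemma Av_eq_singleton:
  assumes "\<sigma>\<^sub>0 \<in> perms n" "\<not> cyc_contains (cyc \<sigma>\<^sub>0) \<pi> V"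
    and "\<And>\<sigma>. \<sigma> \<in> perms n \<Longrightarrow> \<not> cyc_contains (cyc \<sigma>) \<pi> V \<Longrightarrow> cyc \<sigma> = cyc \<sigma>\<^sub>0"
  shows "Av n \<pi> V = {cyc \<sigma>\<^sub>0}"
proof
  show "Av n \<pi> V \<subseteq> {cyc \<sigma>\<^sub>0}"
    using assms(3) unfolding Av_def cyc_perms_def by blast
  show "{cyc \<sigma>\<^sub>0} \<subseteq> Av n \<pi> V"
    using assms(1,2) unfolding Av_def cyc_perms_def by blast
qed

lemma Av_123:
  assumes "1 \<le> n"
  shows "Av n [1, 2, 3] {0} = {cyc (rev [1..<Suc n])}"
proof (rule Av_eq_singleton[OF rev_perms[OF upt_perms]])
  show "\<not> cyc_contains (cyc (rev [1..<Suc n])) [1, 2, 3] {0}"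
  proof (rule not_cyc_contains_if_no_adj_occurrence)
    fix x y z assume "cyc_adj (rev [1..<Suc n]) x y" "z \<in> set (rev [1..<Suc n])"
    then show "\<not> order_iso [x, y, z] [1, 2, 3]"
      using cyc_adj_rev_upt unfolding order_iso_123 by fastforce
  qed simp
next
  fix \<sigma> assume \<sigma>: "\<sigma> \<in> perms n" and av: "\<not> cyc_contains (cyc \<sigma>) [1, 2, 3] {0}"
  show "cyc \<sigma> = cyc (rev [1..<Suc n])"
  proof (rule cyc_eq_rev_upt_if_ascents_end_at_max[OF \<sigma> assms])
    fix x y assume adj: "cyc_adj \<sigma> x y" and "x < y"
    have "y \<le> n" "n \<in> set \<sigma>"
      using cyc_adj_in_set[OF adj] set_perms[OF \<sigma>] assms by auto
    moreover have "\<not> order_iso [x, y, n] [1, 2, 3]"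
      by (rule no_adj_occurrence_if_not_cyc_contains[OF av _ _ adj \<open>n \<in> set \<sigma>\<close>]) simp_all
    ultimately show "y = n"
      using \<open>x < y\<close> unfolding order_iso_123 by auto
  qed
qed

lemma Av_213:
  assumes "1 \<le> n"
  shows "Av n [2, 1, 3] {0} = {cyc [1..<Suc n]}"
proof (rule Av_eq_singleton[OF upt_perms])
  show "\<not> cyc_contains (cyc [1..<Suc n]) [2, 1, 3] {0}"
  proof (rule not_cyc_contains_if_no_adj_occurrence)
    fix x y z assume "cyc_adj [1..<Suc n] x y" "z \<in> set [1..<Suc n]"
    then show "\<not> order_iso [x, y, z] [2, 1, 3]"
      using cyc_adj_upt unfolding order_iso_213 by fastforce
  qed simp
next
  fix \<sigma> assume \<sigma>: "\<sigma> \<in> perms n" and av: "\<not> cyc_contains (cyc \<sigma>) [2, 1, 3] {0}"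
  have "cyc (rev \<sigma>) = cyc (rev [1..<Suc n])"
  proof (rule cyc_eq_rev_upt_if_ascents_end_at_max[OF rev_perms[OF \<sigma>] assms])
    fix x y assume "cyc_adj (rev \<sigma>) x y" "x < y"
    then have adj: "cyc_adj \<sigma> y x"
      by (simp add: cyc_adj_rev)
    have "y \<le> n" "n \<in> set \<sigma>"
      using cyc_adj_in_set[OF adj] set_perms[OF \<sigma>] assms by auto
    moreover have "\<not> order_iso [y, x, n] [2, 1, 3]"
      by (rule no_adj_occurrence_if_not_cyc_contains[OF av _ _ adj \<open>n \<in> set \<sigma>\<close>]) simp_all
    ultimately show "y = n"
      using \<open>x < y\<close> unfolding order_iso_213 by auto
  qed
  then show "cyc \<sigma> = cyc [1..<Suc n]"
    by (simp add: cyc_rev_eq_iff)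
qed

lemma Av_231:
  assumes "1 \<le> n"
  shows "Av n [2, 3, 1] {0} = {cyc (rev [1..<Suc n])}"
proof (rule Av_eq_singleton[OF rev_perms[OF upt_perms]])
  show "\<not> cyc_contains (cyc (rev [1..<Suc n])) [2, 3, 1] {0}"
  proof (rule not_cyc_contains_if_no_adj_occurrence)
    fix x y z assume "cyc_adj (rev [1..<Suc n]) x y" "z \<in> set (rev [1..<Suc n])"
    then show "\<not> order_iso [x, y, z] [2, 3, 1]"
      using cyc_adj_rev_upt unfolding order_iso_231 by fastforce
  qed simp
next
  fix \<sigma> assume \<sigma>: "\<sigma> \<in> perms n" and av: "\<not> cyc_contains (cyc \<sigma>) [2, 3, 1] {0}"
  show "cyc \<sigma> = cyc (rev [1..<Suc n])"
  proof (rule cyc_eq_rev_upt_if_ascents_start_at_min[OF \<sigma> assms])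
    fix x y assume adj: "cyc_adj \<sigma> x y" and "x < y"
    have "1 \<le> x" "1 \<in> set \<sigma>"
      using cyc_adj_in_set[OF adj] set_perms[OF \<sigma>] assms by auto
    moreover have "\<not> order_iso [x, y, 1] [2, 3, 1]"
      by (rule no_adj_occurrence_if_not_cyc_contains[OF av _ _ adj \<open>1 \<in> set \<sigma>\<close>]) simp_all
    ultimately show "x = 1"
      using \<open>x < y\<close> unfolding order_iso_231 by auto
  qed
qed

lemma Av_321:
  assumes "1 \<le> n"
  shows "Av n [3, 2, 1] {0} = {cyc [1..<Suc n]}"
proof (rule Av_eq_singleton[OF upt_perms])
  show "\<not> cyc_contains (cyc [1..<Suc n]) [3, 2, 1] {0}"
  proof (rule not_cyc_contains_if_no_adj_occurrence)
    fix x y z assume "cyc_adj [1..<Suc n] x y" "z \<in> set [1..<Suc n]"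
    then show "\<not> order_iso [x, y, z] [3, 2, 1]"
      using cyc_adj_upt unfolding order_iso_321 by fastforce
  qed simp
next
  fix \<sigma> assume \<sigma>: "\<sigma> \<in> perms n" and av: "\<not> cyc_contains (cyc \<sigma>) [3, 2, 1] {0}"
  have "cyc (rev \<sigma>) = cyc (rev [1..<Suc n])"
  proof (rule cyc_eq_rev_upt_if_ascents_start_at_min[OF rev_perms[OF \<sigma>] assms])
    fix x y assume "cyc_adj (rev \<sigma>) x y" "x < y"
    then have adj: "cyc_adj \<sigma> y x"
      by (simp add: cyc_adj_rev)
    have "1 \<le> x" "1 \<in> set \<sigma>"
      using cyc_adj_in_set[OF adj] set_perms[OF \<sigma>] assms by auto
    moreover have "\<not> order_iso [y, x, 1] [3, 2, 1]"
      by (rule no_adj_occurrence_if_not_cyc_contains[OF av _ _ adj \<open>1 \<in> set \<sigma>\<close>]) simp_all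
    ultimately show "x = 1"
      using \<open>x < y\<close> unfolding order_iso_321 by auto
  qed
  then show "cyc \<sigma> = cyc [1..<Suc n]"
    by (simp add: cyc_rev_eq_iff)
qed

lemma Av_132:
  assumes "1 \<le> n"
  shows "Av n [1, 3, 2] {0} = {cyc [1..<Suc n]}"
proof (rule Av_eq_singleton[OF upt_perms])
  show "\<not> cyc_contains (cyc [1..<Suc n]) [1, 3, 2] {0}"
  proof (rule not_cyc_contains_if_no_adj_occurrence)
    fix x y z assume "cyc_adj [1..<Suc n] x y" "z \<in> set [1..<Suc n]"
    then show "\<not> order_iso [x, y, z] [1, 3, 2]"
      using cyc_adj_upt unfolding order_iso_132 by fastforce
  qed simp
next
  fix \<sigma> assume \<sigma>: "\<sigma> \<in> perms n" and av: "\<not> cyc_contains (cyc \<sigma>) [1, 3, 2] {0}"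
  show "cyc \<sigma> = cyc [1..<Suc n]"
  proof (rule cyc_eq_upt_if_ascents_are_successor[OF \<sigma> assms])
    fix x y assume adj: "cyc_adj \<sigma> x y" and "x < y"
    show "y = Suc x"
    proof (rule ccontr)
      assume "y \<noteq> Suc x"
      with \<open>x < y\<close> have "Suc x < y"
        by simp
      moreover have "Suc x \<in> set \<sigma>"
        using cyc_adj_in_set[OF adj] set_perms[OF \<sigma>] \<open>Suc x < y\<close> by auto
      ultimately show False
        using no_adj_occurrence_if_not_cyc_contains[OF av _ _ adj \<open>Suc x \<in> set \<sigma>\<close>]
        unfolding order_iso_132 by simp
    qed
  qed
qed

lemma Av_312:
  assumes "1 \<le> n"
  shows "Av n [3, 1, 2] {0} = {cyc (rev [1..<Suc n])}"
proof (rule Av_eq_singleton[OF rev_perms[OF upt_perms]])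
  show "\<not> cyc_contains (cyc (rev [1..<Suc n])) [3, 1, 2] {0}"
  proof (rule not_cyc_contains_if_no_adj_occurrence)
    fix x y z assume "cyc_adj (rev [1..<Suc n]) x y" "z \<in> set (rev [1..<Suc n])"
    then show "\<not> order_iso [x, y, z] [3, 1, 2]"
      using cyc_adj_rev_upt unfolding order_iso_312 by fastforce
  qed simp
next
  fix \<sigma> assume \<sigma>: "\<sigma> \<in> perms n" and av: "\<not> cyc_contains (cyc \<sigma>) [3, 1, 2] {0}"
  have "cyc (rev \<sigma>) = cyc [1..<Suc n]"
  proof (rule cyc_eq_upt_if_ascents_are_successor[OF rev_perms[OF \<sigma>] assms])
    fix x y assume "cyc_adj (rev \<sigma>) x y" "x < y"
    then have adj: "cyc_adj \<sigma> y x"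
      by (simp add: cyc_adj_rev)
    show "y = Suc x"
    proof (rule ccontr)
      assume "y \<noteq> Suc x"
      with \<open>x < y\<close> have "Suc x < y"
        by simp
      moreover have "Suc x \<in> set \<sigma>"
        using cyc_adj_in_set[OF adj] set_perms[OF \<sigma>] \<open>Suc x < y\<close> by auto
      ultimately show False
        using no_adj_occurrence_if_not_cyc_contains[OF av _ _ adj \<open>Suc x \<in> set \<sigma>\<close>]
        unfolding order_iso_312 by simp
    qed
  qed
  then show "cyc \<sigma> = cyc (rev [1..<Suc n])"
    using cyc_rev_eq_iff[of \<sigma> "rev [1..<Suc n]"] by simp
qed

theorem theorem3p2:
  fixes \<pi> :: "nat list" and n :: nat
  assumes "\<pi> \<in> {[1,2,3], [2,1,3], [2,3,1], [3,2,1], [1,3,2], [3,1,2]}"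
    and "n \<ge> 1"
  shows "card (Av n \<pi> {0}) = 1"
  using assms(1) Av_123[OF assms(2)] Av_213[OF assms(2)] Av_231[OF assms(2)]
    Av_321[OF assms(2)] Av_132[OF assms(2)] Av_312[OF assms(2)]
  by auto

end
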